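(* For any integers $r,t\ge 3$, $(K_r\times K_t)_{SR}\cong K_r\square K_t$.
   Context: $K_n$ is the complete graph on $n$ vertices. The direct product $G\times H$ has vertex set $V(G)\times V(H)$, with $(a,b)\sim(c,d)$ iff $ac\in E(G)$ and $bd\in E(H)$; the Cartesian product $G\square H$ has vertex set $V(G)\times V(H)$, with $(a,b)\sim(c,d)$ iff ($a=c$ and $bd\in E(H)$) or ($b=d$ and $ac\in E(G)$). For a connected graph $F$ with distance $d_F$, a vertex $u$ is maximally distant from $v$ if $d_F(v,w)\le d_F(u,v)$ for every neighbor $w$ of $u$; distinct $u,v$ are mutually maximally distant if each is maximally distant from the other; the boundary $\partial(F)$ is the set of vertices mutually maximally distant with some vertex; the strong resolving graph $F_{SR}$ has vertex set $\partial(F)$, two vertices adjacent iff they are mutually maximally distant in $F$. *)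

theory Defs
  imports Main
begin

text \<open>A (simple, undirected) graph is a vertex set together with an adjacency relation
  (assumed symmetric and irreflexive for the graphs we build).\<close>
type_synonym 'a graph = "'a set \<times> ('a \<Rightarrow> 'a \<Rightarrow> bool)"

definition verts :: "'a graph \<Rightarrow> 'a set" where "verts G = fst G"
definition adj :: "'a graph \<Rightarrow> 'a \<Rightarrow> 'a \<Rightarrow> bool" where "adj G = snd G"

inductive walk :: "'a graph \<Rightarrow> nat \<Rightarrow> 'a \<Rightarrow> 'a \<Rightarrow> bool" for G where
  walk0: "v \<in> verts G \<Longrightarrow> walk G 0 v v"
| walkS: "walk G n u v \<Longrightarrow> adj G v w \<Longrightarrow> w \<in> verts G \<Longrightarrow> walk G (Suc n) u w"

text \<open>Graph distance (meaningful for connected graphs): the least length of a walk.\<close>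
definition gdist :: "'a graph \<Rightarrow> 'a \<Rightarrow> 'a \<Rightarrow> nat" where
  "gdist G u v = (LEAST n. walk G n u v)"

definition connected_graph :: "'a graph \<Rightarrow> bool" where
  "connected_graph G \<longleftrightarrow> (\<forall>u\<in>verts G. \<forall>v\<in>verts G. \<exists>n. walk G n u v)"

definition max_distant :: "'a graph \<Rightarrow> 'a \<Rightarrow> 'a \<Rightarrow> bool" where
  "max_distant G u v \<longleftrightarrow>
     (\<forall>w\<in>verts G. adj G u w \<longrightarrow> gdist G v w \<le> gdist G u v)"

definition mutually_max_distant :: "'a graph \<Rightarrow> 'a \<Rightarrow> 'a \<Rightarrow> bool" where
  "mutually_max_distant G u v \<longleftrightarrow>
     u \<in> verts G \<and> v \<in> verts G \<and> u \<noteq> v \<and> max_distant G u v \<and> max_distant G v u"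

definition boundary :: "'a graph \<Rightarrow> 'a set" where
  "boundary G = {u \<in> verts G. \<exists>v. mutually_max_distant G u v}"

definition strong_resolving_graph :: "'a graph \<Rightarrow> 'a graph" where
  "strong_resolving_graph G = (boundary G, mutually_max_distant G)"

definition complete_graph :: "nat \<Rightarrow> nat graph" where
  "complete_graph n = ({0..<n}, \<lambda>x y. x \<noteq> y)"

definition direct_product :: "'a graph \<Rightarrow> 'b graph \<Rightarrow> ('a \<times> 'b) graph" where
  "direct_product G H = (verts G \<times> verts H,
     \<lambda>(a, b) (c, d). adj G a c \<and> adj H b d)"

definition cartesian_product :: "'a graph \<Rightarrow> 'b graph \<Rightarrow> ('a \<times> 'b) graph" where
  "cartesian_product G H = (verts G \<times> verts H,
     \<lambda>(a, b) (c, d). (a = c \<and> adj H b d) \<or> (b = d \<and> adj G a c))"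

definition graph_iso :: "'a graph \<Rightarrow> 'b graph \<Rightarrow> bool" where
  "graph_iso G H \<longleftrightarrow> (\<exists>f. bij_betw f (verts G) (verts H) \<and>
     (\<forall>x\<in>verts G. \<forall>y\<in>verts G. adj G x y \<longleftrightarrow> adj H (f x) (f y)))"

end

theory Submission
  imports Defs
begin

text \<open>In \<open>K\<^sub>r \<times> K\<^sub>t\<close> with \<open>r, t \<ge> 3\<close> any two vertices have a common neighbour, so the graph
  has diameter 2 and two distinct vertices are at distance 1 or 2 according to whether they
  differ in both coordinates. Distinct non-adjacent vertices are then trivially mutually
  maximally distant. An adjacent pair \<open>(a,b), (c,d)\<close> is not: \<open>(c,y)\<close> with \<open>y \<noteq> b, d\<close> is a
  neighbour of \<open>(a,b)\<close> at distance 2 from \<open>(c,d)\<close>. Hence the boundary is the whole vertex set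
  and mutual maximal distance is exactly adjacency in \<open>K\<^sub>r \<box> K\<^sub>t\<close>.\<close>

lemma walk_0_eq: "walk G 0 u v \<Longrightarrow> u = v"
  by (erule walk.cases) simp_all

lemma walk_Suc_0_adj: "walk G (Suc 0) u v \<Longrightarrow> adj G u v"
  by (erule walk.cases) (auto dest: walk_0_eq)

lemma walk_2:
  assumes "u \<in> verts G" "w \<in> verts G" "v \<in> verts G" "adj G u w" "adj G w v"
  shows "walk G 2 u v"
  using walkS[OF walkS[OF walk0 assms(4,2)] assms(5,3)] assms(1)
  by (simp add: numeral_2_eq_2)

lemma gdist_le: "walk G n u v \<Longrightarrow> gdist G u v \<le> n"
  unfolding gdist_def by (rule Least_le)

lemma walk_gdist: "walk G n u v \<Longrightarrow> walk G (gdist G u v) u v"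
  unfolding gdist_def by (rule LeastI)

lemma gdist_eq_1:
  assumes "adj G u v" "u \<in> verts G" "v \<in> verts G" "u \<noteq> v"
  shows "gdist G u v = 1"
proof -
  have w: "walk G (Suc 0) u v"
    using assms by (meson walk0 walkS)
  have "gdist G u v \<noteq> 0"
    using walk_gdist[OF w] assms(4) by (metis walk_0_eq)
  with gdist_le[OF w] show ?thesis by linarith
qed

lemma gdist_eq_2:
  assumes "walk G 2 u v" "u \<noteq> v" "\<not> adj G u v"
  shows "gdist G u v = 2"
proof -
  have w: "walk G (gdist G u v) u v"
    using walk_gdist[OF assms(1)] .
  have "gdist G u v \<noteq> 0" using w assms(2) by (metis walk_0_eq)
  moreover have "gdist G u v \<noteq> 1" using w assms(3) by (metis One_nat_def walk_Suc_0_adj)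
  ultimately show ?thesis using gdist_le[OF assms(1)] by linarith
qed

lemma mutually_max_distant_if_not_adj:
  assumes walks: "\<And>x y. x \<in> verts G \<Longrightarrow> y \<in> verts G \<Longrightarrow> walk G 2 x y"
    and "u \<in> verts G" "v \<in> verts G" "u \<noteq> v" "\<not> adj G u v" "\<not> adj G v u"
  shows "mutually_max_distant G u v"
proof -
  have "gdist G u v = 2" "gdist G v u = 2"
    using assms by (auto intro!: gdist_eq_2)
  moreover have "gdist G x y \<le> 2" if "x \<in> verts G" "y \<in> verts G" for x y
    using gdist_le[OF walks[OF that]] .
  ultimately show ?thesis
    using assms(2-4) unfolding mutually_max_distant_def max_distant_def by auto
qed

lemma not_max_distant_if_adj:
  assumes walks: "\<And>x y. x \<in> verts G \<Longrightarrow> y \<in> verts G \<Longrightarrow> walk G 2 x y"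
    and "u \<in> verts G" "v \<in> verts G" "u \<noteq> v" "adj G u v"
    and "w \<in> verts G" "adj G u w" "w \<noteq> v" "\<not> adj G v w"
  shows "\<not> max_distant G u v"
proof -
  have "gdist G u v = 1"
    using assms by (intro gdist_eq_1)
  moreover have "gdist G v w = 2"
    using assms by (intro gdist_eq_2) auto
  ultimately show ?thesis
    using assms(6,7) unfolding max_distant_def by force
qed

lemma graph_iso_if_same_adj:
  assumes "verts G = verts H" "\<And>x y. x \<in> verts G \<Longrightarrow> y \<in> verts G \<Longrightarrow> adj G x y = adj H x y"
  shows "graph_iso G H"
  unfolding graph_iso_def using assms by (intro exI[of _ id]) auto

lemma verts_direct_product_complete:
  "verts (direct_product (complete_graph r) (complete_graph t)) = {0..<r} \<times> {0..<t}"
  by (simp add: direct_product_def complete_graph_def verts_def)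

lemma adj_direct_product_complete:
  "adj (direct_product (complete_graph r) (complete_graph t)) (a, b) (c, d) \<longleftrightarrow> a \<noteq> c \<and> b \<noteq> d"
  by (simp add: direct_product_def complete_graph_def adj_def)

lemma verts_cartesian_product_complete:
  "verts (cartesian_product (complete_graph r) (complete_graph t)) = {0..<r} \<times> {0..<t}"
  by (simp add: cartesian_product_def complete_graph_def verts_def)

lemma adj_cartesian_product_complete:
  "adj (cartesian_product (complete_graph r) (complete_graph t)) (a, b) (c, d) \<longleftrightarrow>
     (a = c \<and> b \<noteq> d) \<or> (b = d \<and> a \<noteq> c)"
  by (auto simp: cartesian_product_def complete_graph_def adj_def)

lemma exists_less_avoiding_two: "3 \<le> (n::nat) \<Longrightarrow> \<exists>x<n. x \<noteq> a \<and> x \<noteq> b"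
  by presburger

lemma walk_2_direct_product_complete:
  assumes "3 \<le> r" "3 \<le> t"
    and "u \<in> verts (direct_product (complete_graph r) (complete_graph t))"
    and "v \<in> verts (direct_product (complete_graph r) (complete_graph t))"
  shows "walk (direct_product (complete_graph r) (complete_graph t)) 2 u v"
proof -
  obtain a b c d where uv: "u = (a, b)" "v = (c, d)" by fastforce
  obtain x where "x < r" "x \<noteq> a" "x \<noteq> c" using exists_less_avoiding_two[OF assms(1)] by blast
  moreover obtain y where "y < t" "y \<noteq> b" "y \<noteq> d" using exists_less_avoiding_two[OF assms(2)] by blast
  ultimately show ?thesis
    using assms(3,4) unfolding uv
    by (intro walk_2[where w = "(x, y)"])
       (auto simp: verts_direct_product_complete adj_direct_product_complete)
qed

lemma mutually_max_distant_direct_product_complete_iff: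
  fixes r t :: nat and G defines "G \<equiv> direct_product (complete_graph r) (complete_graph t)"
  assumes "3 \<le> r" "3 \<le> t" "(a, b) \<in> verts G" "(c, d) \<in> verts G"
  shows "mutually_max_distant G (a, b) (c, d) \<longleftrightarrow> (a = c \<and> b \<noteq> d) \<or> (b = d \<and> a \<noteq> c)"
proof -
  have walks: "\<And>x y. x \<in> verts G \<Longrightarrow> y \<in> verts G \<Longrightarrow> walk G 2 x y"
    unfolding G_def using assms(2,3) by (rule walk_2_direct_product_complete)
  consider "(a, b) = (c, d)" | "a \<noteq> c" "b \<noteq> d" | "(a = c \<and> b \<noteq> d) \<or> (b = d \<and> a \<noteq> c)"
    by blast
  then show ?thesis
  proof cases
    case 1
    then show ?thesis by (auto simp: mutually_max_distant_def)
  next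
    case 2
    obtain y where y: "y < t" "y \<noteq> b" "y \<noteq> d" using exists_less_avoiding_two[OF assms(3)] by blast
    have "\<not> max_distant G (a, b) (c, d)"
      using 2 y assms(4,5)
      by (intro not_max_distant_if_adj[OF walks, where w = "(c, y)"])
         (auto simp: G_def verts_direct_product_complete adj_direct_product_complete)
    with 2 show ?thesis by (auto simp: mutually_max_distant_def)
  next
    case 3
    then have "mutually_max_distant G (a, b) (c, d)"
      using assms(4,5)
      by (intro mutually_max_distant_if_not_adj[OF walks])
         (auto simp: G_def adj_direct_product_complete)
    with 3 show ?thesis by blast
  qed
qed

lemma boundary_direct_product_complete:
  fixes r t :: nat and G defines "G \<equiv> direct_product (complete_graph r) (complete_graph t)"
  assumes "3 \<le> r" "3 \<le> t"
  shows "boundary G = verts G"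
proof -
  have "u \<in> boundary G" if u: "u \<in> verts G" for u
  proof -
    obtain a b where ab: "u = (a, b)" by fastforce
    obtain y where y: "y < t" "y \<noteq> b" using exists_less_avoiding_two[OF assms(3)] by blast
    have "(a, y) \<in> verts G" using u y by (simp add: ab G_def verts_direct_product_complete)
    then have "mutually_max_distant G (a, b) (a, y)"
      using u y unfolding ab G_def by (simp add: mutually_max_distant_direct_product_complete_iff assms)
    then show ?thesis using u unfolding ab boundary_def by blast
  qed
  then show ?thesis unfolding boundary_def by blast
qed

lemma verts_strong_resolving_graph: "verts (strong_resolving_graph G) = boundary G"
  by (simp add: strong_resolving_graph_def verts_def)

lemma adj_strong_resolving_graph: "adj (strong_resolving_graph G) = mutually_max_distant G"
  by (simp add: strong_resolving_graph_def adj_def)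

theorem lemma32:
  fixes r t :: nat
  assumes "r \<ge> 3" and "t \<ge> 3"
  shows "graph_iso
           (strong_resolving_graph (direct_product (complete_graph r) (complete_graph t)))
           (cartesian_product (complete_graph r) (complete_graph t))"
proof (rule graph_iso_if_same_adj)
  let ?G = "direct_product (complete_graph r) (complete_graph t)"
  have verts_SR: "verts (strong_resolving_graph ?G) = verts ?G"
    by (simp add: verts_strong_resolving_graph boundary_direct_product_complete assms)
  then show "verts (strong_resolving_graph ?G) = verts (cartesian_product (complete_graph r) (complete_graph t))"
    by (simp add: verts_direct_product_complete verts_cartesian_product_complete)
  fix x y
  assume "x \<in> verts (strong_resolving_graph ?G)" "y \<in> verts (strong_resolving_graph ?G)"
  moreover obtain a b c d where "x = (a, b)" "y = (c, d)" by fastforce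
  ultimately show "adj (strong_resolving_graph ?G) x y =
      adj (cartesian_product (complete_graph r) (complete_graph t)) x y"
    using verts_SR assms
    by (simp add: adj_strong_resolving_graph mutually_max_distant_direct_product_complete_iff
        adj_cartesian_product_complete)
qed

end
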